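(* Let $\mathcal H$ be a complex Hilbert space and $\mathbf T=(T_1,\dots,T_n)\in B(\mathcal H)^n$ a doubly commuting $n$-tuple such that each $T_j$ has Property (1) (see context). If $z=(z_1,\dots,z_n)\in\sigma_T(\mathbf T)$, then there exist unit vectors $y_m\in\mathcal H$ such that $(T_j-z_j)^*y_m\to0$ as $m\to\infty$ for all $j=1,\dots,n$; that is, $\overline z=(\overline{z_1},\dots,\overline{z_n})$ belongs to the joint approximate point spectrum of $\mathbf T^*=(T_1^*,\dots,T_n^* )$.
   Context: Doubly commuting: $T_iT_j=T_jT_i$ and $T_i^*T_j=T_jT_i^*$ for $i\ne j$. Property (1) for an operator $T$: for every $z\in\mathbb C$ and every sequence $\{x_m\}$ of unit vectors, $(T-z)x_m\to0$ implies $(T-z)^*x_m\to0$. $\sigma_T$ denotes the Taylor spectrum: $z\in\sigma_T(\mathbf T)$ iff the Koszul complex of $(T_1-z_1,\dots,T_n-z_n)$ is not exact, where for a commuting tuple $\mathbf A$ the Koszul complex is $0\to E^n_n(\mathcal H)\xrightarrow{D_n}\cdots\xrightarrow{D_1}E^n_0(\mathcal H)\to0$ with $E^n_k(\mathcal H)=\mathcal H\otimes E^n_k$ ($E^n$ the exterior algebra on $e_1,\dots,e_n$) and $D_k(x\otimes e_{j_1}\wedge\cdots\wedge e_{j_k})=\sum_{i=1}^k(-1)^{i-1}A_{j_i}x\otimes e_{j_1}\wedge\cdots\wedge\check e_{j_i}\wedge\cdots\wedge e_{j_k}$. The joint approximate point spectrum of $(A_1,\dots,A_n)$ is the set of $w\in\mathbb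 C^n$ for which there are unit vectors $x_m$ with $(A_j-w_j)x_m\to0$ for all $j$. *)

theory Defs
  imports "HOL-Analysis.Analysis"
begin

text \<open>A complex structure on a
  real vector space is given by an operator J (multiplication by the imaginary unit)
  with J (J x) = - x; complex scalar multiplication is then
  c \<cdot> x = Re c *R x + Im c *R J x.\<close>
definition complex_structure :: "('a::real_vector \<Rightarrow> 'a) \<Rightarrow> bool" where
  "complex_structure J \<longleftrightarrow> linear J \<and> (\<forall>x. J (J x) = - x)"

definition scC :: "('a::real_vector \<Rightarrow> 'a) \<Rightarrow> complex \<Rightarrow> 'a \<Rightarrow> 'a" where
  "scC J c x = Re c *\<^sub>R x + Im c *\<^sub>R J x"

definition complex_inner_product ::
    "('a::real_vector \<Rightarrow> 'a) \<Rightarrow> ('a \<Rightarrow> 'a \<Rightarrow> complex) \<Rightarrow> bool" where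
  "complex_inner_product J ip \<longleftrightarrow>
     complex_structure J \<and>
     (\<forall>x y z. ip (x + y) z = ip x z + ip y z) \<and>
     (\<forall>c x y. ip (scC J c x) y = c * ip x y) \<and>
     (\<forall>x y. ip y x = cnj (ip x y)) \<and>
     (\<forall>x. Re (ip x x) \<ge> 0 \<and> Im (ip x x) = 0) \<and>
     (\<forall>x. ip x x = 0 \<longrightarrow> x = 0)"

definition complex_hilbert :: "('a::banach \<Rightarrow> 'a) \<Rightarrow> ('a \<Rightarrow> 'a \<Rightarrow> complex) \<Rightarrow> bool" where
  "complex_hilbert J ip \<longleftrightarrow> complex_inner_product J ip \<and> (\<forall>x. norm x = sqrt (Re (ip x x)))"

definition bounded_clinear_op :: "('a::real_normed_vector \<Rightarrow> 'a) \<Rightarrow> ('a \<Rightarrow> 'a) \<Rightarrow> bool" where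
  "bounded_clinear_op J T \<longleftrightarrow> bounded_linear T \<and> (\<forall>c x. T (scC J c x) = scC J c (T x))"

definition adj :: "('a \<Rightarrow> 'a \<Rightarrow> complex) \<Rightarrow> ('a \<Rightarrow> 'a) \<Rightarrow> 'a \<Rightarrow> 'a" where
  "adj ip T = (\<lambda>y. THE z. \<forall>x. ip (T x) y = ip x z)"

definition shift :: "('a::real_vector \<Rightarrow> 'a) \<Rightarrow> ('a \<Rightarrow> 'a) \<Rightarrow> complex \<Rightarrow> 'a \<Rightarrow> 'a" where
  "shift J T z = (\<lambda>x. T x - scC J z x)"

definition property1 :: "('a::real_normed_vector \<Rightarrow> 'a) \<Rightarrow> ('a \<Rightarrow> 'a \<Rightarrow> complex) \<Rightarrow> ('a \<Rightarrow> 'a) \<Rightarrow> bool" where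
  "property1 J ip T \<longleftrightarrow>
     (\<forall>z (x::nat \<Rightarrow> 'a). (\<forall>m. norm (x m) = 1) \<longrightarrow>
        (\<lambda>m. shift J T z (x m)) \<longlonglongrightarrow> 0 \<longrightarrow>
        (\<lambda>m. adj ip (shift J T z) (x m)) \<longlonglongrightarrow> 0)"

text \<open>Tuples (T_1,...,T_n) are indexed by j < n.\<close>
definition doubly_commuting :: "('a \<Rightarrow> 'a \<Rightarrow> complex) \<Rightarrow> nat \<Rightarrow> (nat \<Rightarrow> 'a \<Rightarrow> 'a) \<Rightarrow> bool" where
  "doubly_commuting ip n T \<longleftrightarrow>
     (\<forall>i<n. \<forall>j<n. i \<noteq> j \<longrightarrow>
        T i \<circ> T j = T j \<circ> T i \<and> adj ip (T i) \<circ> T j = T j \<circ> adj ip (T i))"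

text \<open>E^n_k(H) = H \<otimes> E^n_k is represented as the H-valued functions
  on k-element subsets of {0..<n} (the coefficient of e_{j_1}\<and>...\<and>e_{j_k},
  j_1<...<j_k). The differential
  D(x \<otimes> e_{j_1}\<and>...\<and>e_{j_k}) = \<Sum>_i (-1)^(i-1) A_{j_i} x \<otimes> (e_{j_i} omitted)
  becomes, coefficientwise, (D f) J = \<Sum>_{i\<notin>J} (-1)^{#{j\<in>J. j<i}} A_i (f (J \<union> {i})).\<close>
definition koszul_chains :: "nat \<Rightarrow> nat \<Rightarrow> (nat set \<Rightarrow> 'a::zero) set" where
  "koszul_chains n k = {f. \<forall>J. f J \<noteq> 0 \<longrightarrow> J \<subseteq> {..<n} \<and> card J = k}"

definition koszul_d :: "nat \<Rightarrow> (nat \<Rightarrow> 'a \<Rightarrow> 'a) \<Rightarrow> (nat set \<Rightarrow> 'a::real_vector) \<Rightarrow> nat set \<Rightarrow> 'a" where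
  "koszul_d n A f = (\<lambda>J. if J \<subseteq> {..<n}
      then (\<Sum>i\<in>{..<n} - J. ((-1::real) ^ card {j\<in>J. j < i}) *\<^sub>R A i (f (insert i J)))
      else 0)"

text \<open>Exactness at every degree k: ker D_k = ran D_{k+1} (D_0 = 0, and D_{n+1} = 0 since
  there are no (n+1)-subsets). On k-chains, koszul_d is D_k (for k = 0 it is 0).\<close>
definition koszul_exact :: "nat \<Rightarrow> (nat \<Rightarrow> 'a::real_vector \<Rightarrow> 'a) \<Rightarrow> bool" where
  "koszul_exact n A \<longleftrightarrow>
     (\<forall>k. {f \<in> koszul_chains n k. koszul_d n A f = (\<lambda>J. 0)}
            = koszul_d n A ` koszul_chains n (Suc k))"

definition taylor_spectrum :: "('a::real_vector \<Rightarrow> 'a) \<Rightarrow> nat \<Rightarrow> (nat \<Rightarrow> 'a \<Rightarrow> 'a) \<Rightarrow> (nat \<Rightarrow> complex) set" where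
  "taylor_spectrum J n T = {z. \<not> koszul_exact n (\<lambda>j. shift J (T j) (z j))}"

definition joint_approx_point_spectrum ::
    "('a::real_normed_vector \<Rightarrow> 'a) \<Rightarrow> nat \<Rightarrow> (nat \<Rightarrow> 'a \<Rightarrow> 'a) \<Rightarrow> (nat \<Rightarrow> complex) set" where
  "joint_approx_point_spectrum J n A =
     {w. \<exists>x::nat \<Rightarrow> 'a. (\<forall>m. norm (x m) = 1) \<and>
          (\<forall>j<n. (\<lambda>m. shift J (A j) (w j) (x m)) \<longlonglongrightarrow> 0)}"

end

(* Write A_j = T_j - z_j and B_j = A_j*. Suppose no unit sequence is asymptotically
   annihilated by all B_j. For S a set of indices, the operator
   L_S = sum_{j not in S} A_j B_j + sum_{j in S} B_j A_j has
   <L_S x, x> = sum_{j not in S} |B_j x|^2 + sum_{j in S} |A_j x|^2, and this is bounded below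
   by c |x|^2: along a unit sequence on which it tends to 0, Property (1) turns A_j y_m -> 0
   into B_j y_m -> 0 for j in S, so all B_j would annihilate the sequence. By Lax-Milgram
   every L_S is invertible. Double commutativity makes L_S the action of D E + E D on the
   coefficient at e_S, where D is the Koszul differential of A and E the one of B running
   upwards; hence D g = 0 for g = (D E + E D)^-1 f whenever D f = 0, and f = D (E g). So the
   Koszul complex of T - z is exact, contradicting z in the Taylor spectrum. *)

theory Submission
  imports Defs
begin

section \<open>Koszul complexes\<close>

definition koszul_sign :: "nat set \<Rightarrow> nat \<Rightarrow> real" where
  "koszul_sign S i = (-1) ^ card {j\<in>S. j < i}"

lemma koszul_sign_square [simp]: "koszul_sign S i * koszul_sign S i = 1"
  unfolding koszul_sign_def by (simp flip: power_add)

lemma koszul_sign_insert: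
  assumes "finite S" and "k \<notin> S"
  shows "koszul_sign (insert k S) i = (if k < i then - koszul_sign S i else koszul_sign S i)"
proof -
  have "{j\<in>insert k S. j < i} = (if k < i then insert k {j\<in>S. j < i} else {j\<in>S. j < i})"
    by auto
  then show ?thesis
    using assms by (simp add: koszul_sign_def)
qed

lemma koszul_d_apply:
  "J \<subseteq> {..<n} \<Longrightarrow>
    koszul_d n A f J = (\<Sum>i\<in>{..<n} - J. koszul_sign J i *\<^sub>R A i (f (insert i J)))"
  by (simp add: koszul_d_def koszul_sign_def)

lemma koszul_d_outside: "\<not> J \<subseteq> {..<n} \<Longrightarrow> koszul_d n A f J = 0"
  by (simp add: koszul_d_def)

text \<open>The Koszul differential of a second tuple B running upwards in degree,
  E (x \<otimes> e_J) = \<Sum>_{l\<notin>J} B_l x \<otimes> e_l \<and> e_J; for B = A* it is the adjoint of D.\<close>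
definition koszul_dual_d ::
    "nat \<Rightarrow> (nat \<Rightarrow> 'a \<Rightarrow> 'a) \<Rightarrow> (nat set \<Rightarrow> 'a::real_vector) \<Rightarrow> nat set \<Rightarrow> 'a" where
  "koszul_dual_d n B g = (\<lambda>K. if K \<subseteq> {..<n}
      then (\<Sum>l\<in>K. koszul_sign (K - {l}) l *\<^sub>R B l (g (K - {l}))) else 0)"

lemma koszul_dual_d_apply:
  "K \<subseteq> {..<n} \<Longrightarrow>
    koszul_dual_d n B g K = (\<Sum>l\<in>K. koszul_sign (K - {l}) l *\<^sub>R B l (g (K - {l})))"
  by (simp add: koszul_dual_d_def)

lemma koszul_dual_d_outside: "\<not> K \<subseteq> {..<n} \<Longrightarrow> koszul_dual_d n B g K = 0"
  by (simp add: koszul_dual_d_def)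

definition koszul_laplacian ::
    "nat \<Rightarrow> (nat \<Rightarrow> 'a \<Rightarrow> 'a) \<Rightarrow> (nat \<Rightarrow> 'a \<Rightarrow> 'a) \<Rightarrow> nat set \<Rightarrow> 'a::real_vector \<Rightarrow> 'a" where
  "koszul_laplacian n A B S x = (\<Sum>i\<in>{..<n} - S. A i (B i x)) + (\<Sum>l\<in>S. B l (A l x))"

lemma double_sum_antisym_eq_0:
  fixes t :: "'i \<Rightarrow> 'i \<Rightarrow> 'a::real_vector"
  assumes "\<And>i l. i \<in> S \<Longrightarrow> l \<in> S \<Longrightarrow> t l i = - t i l"
  shows "(\<Sum>i\<in>S. \<Sum>l\<in>S. t i l) = 0"
proof -
  have "(\<Sum>i\<in>S. \<Sum>l\<in>S. t i l) = (\<Sum>l\<in>S. \<Sum>i\<in>S. t i l)"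
    by (rule sum.swap)
  also have "\<dots> = (\<Sum>l\<in>S. \<Sum>i\<in>S. - t l i)"
    by (intro sum.cong refl) (metis assms)
  finally have "(\<Sum>i\<in>S. \<Sum>l\<in>S. t i l) + (\<Sum>i\<in>S. \<Sum>l\<in>S. t i l) = 0"
    by (simp add: sum_negf eq_neg_iff_add_eq_0)
  then show ?thesis
    by (simp flip: scaleR_2)
qed

locale commuting_linear_tuple =
  fixes n :: nat and A :: "nat \<Rightarrow> 'a::real_vector \<Rightarrow> 'a"
  assumes linear_A: "i < n \<Longrightarrow> linear (A i)"
    and A_commute: "i < n \<Longrightarrow> l < n \<Longrightarrow> A i (A l x) = A l (A i x)"
begin

lemma A_zero: "i < n \<Longrightarrow> A i 0 = 0"
  by (rule linear_0[OF linear_A])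

lemma koszul_d_add: "koszul_d n A (\<lambda>J. u J + v J) = (\<lambda>J. koszul_d n A u J + koszul_d n A v J)"
proof
  fix J
  show "koszul_d n A (\<lambda>J. u J + v J) J = koszul_d n A u J + koszul_d n A v J"
  proof (cases "J \<subseteq> {..<n}")
    case True
    have "koszul_d n A (\<lambda>J. u J + v J) J = (\<Sum>i\<in>{..<n} - J.
        koszul_sign J i *\<^sub>R A i (u (insert i J)) + koszul_sign J i *\<^sub>R A i (v (insert i J)))"
      using True by (simp add: koszul_d_apply linear_add[OF linear_A] scaleR_add_right)
    then show ?thesis
      using True by (simp add: koszul_d_apply sum.distrib)
  qed (simp add: koszul_d_outside)
qed

lemma koszul_d_chains:
  assumes "f \<in> koszul_chains n (Suc k)"
  shows "koszul_d n A f \<in> koszul_chains n k"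
  unfolding koszul_chains_def
proof (intro CollectI allI impI)
  fix J assume nonzero: "koszul_d n A f J \<noteq> 0"
  then have J: "J \<subseteq> {..<n}"
    using koszul_d_outside by blast
  then have "finite J"
    by (rule finite_subset) simp
  have "card J = k"
  proof (rule ccontr)
    assume "card J \<noteq> k"
    then have "card (insert i J) \<noteq> Suc k" if "i \<notin> J" for i
      using that \<open>finite J\<close> by simp
    then have "f (insert i J) = 0" if "i \<notin> J" for i
      using assms that unfolding koszul_chains_def by blast
    then have "koszul_d n A f J = 0"
      using J by (simp add: koszul_d_apply A_zero)
    with nonzero show False ..
  qed
  with J show "J \<subseteq> {..<n} \<and> card J = k" ..
qed

lemma koszul_d_koszul_d: "koszul_d n A (koszul_d n A f) = (\<lambda>J. 0)"
proof
  fix J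
  show "koszul_d n A (koszul_d n A f) J = 0"
  proof (cases "J \<subseteq> {..<n}")
    case True
    let ?S = "{..<n} - J"
    have "finite J"
      using True by (rule finite_subset) simp
    \<comment> \<open>the diagonal is set to 0 so that the inner sum can range over all of ?S\<close>
    define t where "t i l = (if i = l then 0 else
        (koszul_sign J i * koszul_sign (insert i J) l) *\<^sub>R A i (A l (f (insert l (insert i J)))))"
      for i l
    have "koszul_d n A (koszul_d n A f) J
        = (\<Sum>i\<in>?S. koszul_sign J i *\<^sub>R A i (koszul_d n A f (insert i J)))"
      using True by (rule koszul_d_apply)
    also have "\<dots> = (\<Sum>i\<in>?S. \<Sum>l\<in>?S. t i l)"
    proof (rule sum.cong[OF refl])
      fix i assume i: "i \<in> ?S"
      have "insert i J \<subseteq> {..<n}"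
        using i True by auto
      then have "koszul_sign J i *\<^sub>R A i (koszul_d n A f (insert i J))
          = (\<Sum>l\<in>{..<n} - insert i J. t i l)"
        using i by (simp add: koszul_d_apply linear_sum[OF linear_A] linear_scale[OF linear_A]
            scaleR_sum_right t_def)
      also have "\<dots> = (\<Sum>l\<in>?S. t i l)"
        by (rule sum.mono_neutral_left) (auto simp: t_def)
      finally show "koszul_sign J i *\<^sub>R A i (koszul_d n A f (insert i J)) = (\<Sum>l\<in>?S. t i l)" .
    qed
    also have "\<dots> = 0"
    proof (rule double_sum_antisym_eq_0)
      fix i l assume i: "i \<in> ?S" and l: "l \<in> ?S"
      have "insert l (insert i J) = insert i (insert l J)"
        by blast
      then have "A l (A i (f (insert i (insert l J)))) = A i (A l (f (insert l (insert i J))))"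
        using i l A_commute[of l i] by simp
      moreover have "koszul_sign J l * koszul_sign (insert l J) i
          = - (koszul_sign J i * koszul_sign (insert i J) l)" if "i \<noteq> l"
        using i l that \<open>finite J\<close> by (cases "i < l") (simp_all add: koszul_sign_insert)
      ultimately show "t l i = - t i l"
        by (simp add: t_def)
    qed
    finally show ?thesis .
  qed (rule koszul_d_outside)
qed

end

locale koszul_pair = commuting_linear_tuple n A for n A +
  fixes B :: "nat \<Rightarrow> 'a::real_vector \<Rightarrow> 'a"
  assumes linear_B: "i < n \<Longrightarrow> linear (B i)"
    and B_A_commute: "i < n \<Longrightarrow> l < n \<Longrightarrow> i \<noteq> l \<Longrightarrow> B l (A i x) = A i (B l x)"
begin

lemma B_zero: "i < n \<Longrightarrow> B i 0 = 0"
  by (rule linear_0[OF linear_B])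

lemma koszul_dual_d_zero: "koszul_dual_d n B (\<lambda>J. 0) = (\<lambda>J. 0)"
proof
  fix K
  show "koszul_dual_d n B (\<lambda>J. 0) K = 0"
    by (cases "K \<subseteq> {..<n}")
      (auto simp: koszul_dual_d_apply koszul_dual_d_outside B_zero intro!: sum.neutral)
qed

lemma koszul_dual_d_chains:
  assumes g: "g \<in> koszul_chains n k"
  shows "koszul_dual_d n B g \<in> koszul_chains n (Suc k)"
  unfolding koszul_chains_def
proof (intro CollectI allI impI)
  fix K assume nonzero: "koszul_dual_d n B g K \<noteq> 0"
  then have K: "K \<subseteq> {..<n}"
    using koszul_dual_d_outside by blast
  have "\<exists>l\<in>K. g (K - {l}) \<noteq> 0"
  proof (rule ccontr)
    assume "\<not> ?thesis"
    then have "koszul_dual_d n B g K = 0"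
      using K by (intro trans[OF koszul_dual_d_apply] sum.neutral) (auto simp: B_zero)
    with nonzero show False ..
  qed
  then obtain l where l: "l \<in> K" and "g (K - {l}) \<noteq> 0" ..
  then have "card (K - {l}) = k"
    using g unfolding koszul_chains_def by blast
  moreover have "finite K"
    using K by (rule finite_subset) simp
  ultimately have "card K = Suc k"
    using l by (metis card_Suc_Diff1)
  with K show "K \<subseteq> {..<n} \<and> card K = Suc k" ..
qed

lemma koszul_laplacian_zero:
  assumes "S \<subseteq> {..<n}"
  shows "koszul_laplacian n A B S 0 = 0"
  using assms by (auto simp: koszul_laplacian_def A_zero B_zero intro!: sum.neutral)

lemma koszul_d_dual_d_apply:
  assumes J: "J \<subseteq> {..<n}"
  shows "koszul_d n A (koszul_dual_d n B g) J = (\<Sum>i\<in>{..<n} - J. A i (B i (g J)))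
    + (\<Sum>i\<in>{..<n} - J. \<Sum>l\<in>J. (koszul_sign J i * koszul_sign (insert i (J - {l})) l)
        *\<^sub>R A i (B l (g (insert i (J - {l})))))"
proof -
  have "finite J"
    using J by (rule finite_subset) simp
  have "koszul_sign J i *\<^sub>R A i (koszul_dual_d n B g (insert i J)) = A i (B i (g J))
      + (\<Sum>l\<in>J. (koszul_sign J i * koszul_sign (insert i (J - {l})) l)
          *\<^sub>R A i (B l (g (insert i (J - {l})))))"
    if i: "i \<in> {..<n} - J" for i
  proof -
    have "i \<notin> J" "i < n" "insert i J \<subseteq> {..<n}"
      using i J by auto
    have "(\<Sum>l\<in>J. koszul_sign (insert i J - {l}) l *\<^sub>R B l (g (insert i J - {l})))
        = (\<Sum>l\<in>J. koszul_sign (insert i (J - {l})) l *\<^sub>R B l (g (insert i (J - {l}))))"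
      using \<open>i \<notin> J\<close> by (intro sum.cong refl) (metis insert_Diff_if singletonD)
    then have "koszul_dual_d n B g (insert i J) = koszul_sign J i *\<^sub>R B i (g J)
        + (\<Sum>l\<in>J. koszul_sign (insert i (J - {l})) l *\<^sub>R B l (g (insert i (J - {l}))))"
      using \<open>finite J\<close> \<open>i \<notin> J\<close> \<open>insert i J \<subseteq> {..<n}\<close> by (simp add: koszul_dual_d_apply)
    then show ?thesis
      using \<open>i < n\<close> by (simp add: linear_add[OF linear_A] linear_sum[OF linear_A]
          linear_scale[OF linear_A] scaleR_add_right scaleR_sum_right o_def)
  qed
  then show ?thesis
    using J by (simp add: koszul_d_apply sum.distrib)
qed

lemma koszul_dual_d_d_term:
  assumes J: "J \<subseteq> {..<n}" and l: "l \<in> J"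
  shows "koszul_sign (J - {l}) l *\<^sub>R B l (koszul_d n A g (J - {l})) = B l (A l (g J))
    - (\<Sum>i\<in>{..<n} - J. (koszul_sign J i * koszul_sign (insert i (J - {l})) l)
        *\<^sub>R A i (B l (g (insert i (J - {l})))))"
proof -
  let ?S = "{..<n} - J" and ?K = "J - {l}"
  have "l < n" "finite ?K" "l \<notin> ?K" "insert l ?K = J" "l \<notin> ?S" "?K \<subseteq> {..<n}"
    using l J finite_subset[OF J] by auto
  have "{..<n} - ?K = insert l ?S"
    using l J by auto
  then have "koszul_d n A g ?K = (\<Sum>i\<in>insert l ?S. koszul_sign ?K i *\<^sub>R A i (g (insert i ?K)))"
    using koszul_d_apply[OF \<open>?K \<subseteq> {..<n}\<close>] by simp
  also have "\<dots> = koszul_sign ?K l *\<^sub>R A l (g J)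
      + (\<Sum>i\<in>?S. koszul_sign ?K i *\<^sub>R A i (g (insert i ?K)))"
    using \<open>l \<notin> ?S\<close> by (simp add: insert_absorb[OF l])
  finally have "koszul_sign ?K l *\<^sub>R B l (koszul_d n A g ?K) = B l (A l (g J))
      + (\<Sum>i\<in>?S. (koszul_sign ?K l * koszul_sign ?K i) *\<^sub>R B l (A i (g (insert i ?K))))"
    using \<open>l < n\<close> by (simp add: linear_add[OF linear_B] linear_sum[OF linear_B]
        linear_scale[OF linear_B] scaleR_add_right scaleR_sum_right o_def)
  also have "\<dots> = B l (A l (g J)) + (\<Sum>i\<in>?S. - ((koszul_sign J i * koszul_sign (insert i ?K) l)
      *\<^sub>R A i (B l (g (insert i ?K)))))"
  proof (intro arg_cong2[where f = "(+)"] sum.cong refl)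
    fix i assume i: "i \<in> ?S"
    then have "i \<noteq> l" "i < n" "i \<notin> ?K"
      using l by auto
    have "koszul_sign J i = (if l < i then - koszul_sign ?K i else koszul_sign ?K i)"
      using koszul_sign_insert[OF \<open>finite ?K\<close> \<open>l \<notin> ?K\<close>] unfolding \<open>insert l ?K = J\<close> .
    then have "koszul_sign ?K l * koszul_sign ?K i = - (koszul_sign J i * koszul_sign (insert i ?K) l)"
      using \<open>i \<noteq> l\<close> \<open>i \<notin> ?K\<close> \<open>finite ?K\<close> by (cases "i < l") (simp_all add: koszul_sign_insert)
    then show "(koszul_sign ?K l * koszul_sign ?K i) *\<^sub>R B l (A i (g (insert i ?K)))
        = - ((koszul_sign J i * koszul_sign (insert i ?K) l) *\<^sub>R A i (B l (g (insert i ?K))))"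
      using B_A_commute[OF \<open>i < n\<close> \<open>l < n\<close> \<open>i \<noteq> l\<close>] by simp
  qed
  finally show ?thesis
    by (simp add: sum_negf)
qed

lemma koszul_dual_d_d_apply:
  assumes J: "J \<subseteq> {..<n}"
  shows "koszul_dual_d n B (koszul_d n A g) J = (\<Sum>l\<in>J. B l (A l (g J)))
    - (\<Sum>i\<in>{..<n} - J. \<Sum>l\<in>J. (koszul_sign J i * koszul_sign (insert i (J - {l})) l)
        *\<^sub>R A i (B l (g (insert i (J - {l})))))"
proof -
  have "koszul_dual_d n B (koszul_d n A g) J = (\<Sum>l\<in>J. B l (A l (g J))
      - (\<Sum>i\<in>{..<n} - J. (koszul_sign J i * koszul_sign (insert i (J - {l})) l)
          *\<^sub>R A i (B l (g (insert i (J - {l}))))))"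
    unfolding koszul_dual_d_apply[OF J] using J by (intro sum.cong refl koszul_dual_d_d_term)
  also have "\<dots> = (\<Sum>l\<in>J. B l (A l (g J)))
      - (\<Sum>l\<in>J. \<Sum>i\<in>{..<n} - J. (koszul_sign J i * koszul_sign (insert i (J - {l})) l)
          *\<^sub>R A i (B l (g (insert i (J - {l})))))"
    by (rule sum_subtractf)
  finally show ?thesis
    by (simp only: sum.swap[of _ J])
qed

lemma koszul_homotopy:
  assumes "J \<subseteq> {..<n}"
  shows "koszul_d n A (koszul_dual_d n B g) J + koszul_dual_d n B (koszul_d n A g) J
    = koszul_laplacian n A B J (g J)"
  unfolding koszul_d_dual_d_apply[OF assms] koszul_dual_d_d_apply[OF assms] koszul_laplacian_def
  by simp


lemma koszul_cycle_eq_d_dual_d: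
  assumes inj: "\<And>S. S \<subseteq> {..<n} \<Longrightarrow> inj (koszul_laplacian n A B S)"
    and g: "\<And>S. S \<subseteq> {..<n} \<Longrightarrow> koszul_laplacian n A B S (g S) = f S"
    and f_outside: "\<And>S. \<not> S \<subseteq> {..<n} \<Longrightarrow> f S = 0"
    and cycle: "koszul_d n A f = (\<lambda>J. 0)"
  shows "f = koszul_d n A (koszul_dual_d n B g)"
proof -
  have f_eq: "f = (\<lambda>S. koszul_d n A (koszul_dual_d n B g) S + koszul_dual_d n B (koszul_d n A g) S)"
  proof
    fix S
    show "f S = koszul_d n A (koszul_dual_d n B g) S + koszul_dual_d n B (koszul_d n A g) S"
      by (cases "S \<subseteq> {..<n}")
        (simp_all add: koszul_homotopy g f_outside koszul_d_outside koszul_dual_d_outside)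
  qed
  have "koszul_d n A f = koszul_d n A (koszul_dual_d n B (koszul_d n A g))"
    by (subst f_eq) (simp add: koszul_d_add koszul_d_koszul_d)
  then have d_dual_d_d: "koszul_d n A (koszul_dual_d n B (koszul_d n A g)) = (\<lambda>J. 0)"
    using cycle by simp
  have "koszul_d n A g = (\<lambda>J. 0)"
  proof
    fix S
    show "koszul_d n A g S = 0"
    proof (cases "S \<subseteq> {..<n}")
      case True
      have "koszul_laplacian n A B S (koszul_d n A g S) = koszul_laplacian n A B S 0"
        using koszul_homotopy[OF True, of "koszul_d n A g"] d_dual_d_d
        by (simp add: koszul_d_koszul_d koszul_dual_d_zero koszul_laplacian_zero[OF True])
      with inj[OF True] show ?thesis
        by (rule injD)
    qed (rule koszul_d_outside)
  qed
  then show ?thesis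
    by (subst f_eq) (simp add: koszul_dual_d_zero)
qed

lemma koszul_cycle_is_boundary:
  assumes bij: "\<And>S. S \<subseteq> {..<n} \<Longrightarrow> bij (koszul_laplacian n A B S)"
    and f: "f \<in> koszul_chains n k" and cycle: "koszul_d n A f = (\<lambda>J. 0)"
  shows "f \<in> koszul_d n A ` koszul_chains n (Suc k)"
proof -
  let ?L = "koszul_laplacian n A B"
  define g where "g S = (if S \<subseteq> {..<n} then inv (?L S) (f S) else 0)" for S
  have L_g: "?L S (g S) = f S" if "S \<subseteq> {..<n}" for S
    using bij[OF that] that by (simp add: g_def bij_is_surj surj_f_inv_f)
  have g: "g \<in> koszul_chains n k"
    unfolding koszul_chains_def
  proof (intro CollectI allI impI)
    fix S assume "g S \<noteq> 0"
    then have S: "S \<subseteq> {..<n}"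
      by (auto simp: g_def split: if_splits)
    with \<open>g S \<noteq> 0\<close> have "f S \<noteq> 0"
      using L_g[OF S] koszul_laplacian_zero[OF S] bij_is_inj[OF bij[OF S]] by (metis injD)
    with S show "S \<subseteq> {..<n} \<and> card S = k"
      using f unfolding koszul_chains_def by blast
  qed
  have f_outside: "f S = 0" if "\<not> S \<subseteq> {..<n}" for S
    using f that unfolding koszul_chains_def by blast
  have "f = koszul_d n A (koszul_dual_d n B g)"
    using bij_is_inj[OF bij] L_g f_outside cycle by (rule koszul_cycle_eq_d_dual_d)
  then show ?thesis
    using koszul_dual_d_chains[OF g] by blast
qed

lemma koszul_exact_if_laplacian_bij:
  assumes "\<And>S. S \<subseteq> {..<n} \<Longrightarrow> bij (koszul_laplacian n A B S)"
  shows "koszul_exact n A"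
  unfolding koszul_exact_def
  using koszul_cycle_is_boundary[OF assms] koszul_d_chains koszul_d_koszul_d by blast

end

lemma eq_0_if_quadratic_nonneg:
  fixes a b :: real
  assumes "\<And>t. 0 \<le> 2 * t * a + t\<^sup>2 * b"
  shows "a = 0"
proof -
  define c where "c = \<bar>b\<bar> + 1"
  have "c > 0"
    by (simp add: c_def add_nonneg_pos)
  have "0 \<le> (2 * (- a / c) * a + (- a / c)\<^sup>2 * b) * c\<^sup>2"
    by (rule mult_nonneg_nonneg[OF assms]) simp
  also have "\<dots> = a\<^sup>2 * (b - 2 * c)"
    using \<open>c > 0\<close> by (simp add: field_simps power2_eq_square)
  finally have "0 \<le> a\<^sup>2 * (b - 2 * c)" .
  moreover have "b - 2 * c < 0"
    unfolding c_def by (simp add: abs_if)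
  ultimately show ?thesis
    by (simp add: zero_le_mult_iff)
qed

section \<open>The real inner product of a complex Hilbert space\<close>

text \<open>The Hilbert space is a Banach space with an inner-product function rather than an
  instance of a type class, so the Riesz representation and Lax--Milgram theorems are proved
  here for the real inner product Re ip.\<close>

locale complex_hilbert_space =
  fixes J :: "'a::banach \<Rightarrow> 'a" and ip :: "'a \<Rightarrow> 'a \<Rightarrow> complex"
  assumes complex_hilbert: "complex_hilbert J ip"
begin

lemma complex_inner_product: "complex_inner_product J ip"
  using complex_hilbert unfolding complex_hilbert_def by (rule conjunct1)

text \<open>The axioms are extracted without the simplifier, which loops on the symmetry axiom.\<close>

lemma ip_add_left: "ip (x + y) z = ip x z + ip y z"
proof -
  have "\<forall>x y z. ip (x + y) z = ip x z + ip y z"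
    using complex_inner_product unfolding complex_inner_product_def by (elim conjE) assumption
  then show ?thesis
    by blast
qed

lemma ip_scC_left: "ip (scC J c x) y = c * ip x y"
proof -
  have "\<forall>c x y. ip (scC J c x) y = c * ip x y"
    using complex_inner_product unfolding complex_inner_product_def by (elim conjE) assumption
  then show ?thesis
    by blast
qed

lemma ip_commute: "ip y x = cnj (ip x y)"
proof -
  have "\<forall>x y. ip y x = cnj (ip x y)"
    using complex_inner_product unfolding complex_inner_product_def by (elim conjE) assumption
  then show ?thesis
    by blast
qed

lemma Re_ip_self: "Re (ip x x) = (norm x)\<^sup>2"
proof -
  have "\<forall>x. Re (ip x x) \<ge> 0 \<and> Im (ip x x) = 0"
    using complex_inner_product unfolding complex_inner_product_def by (elim conjE) assumption
  moreover have "\<forall>x. norm x = sqrt (Re (ip x x))"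
    using complex_hilbert unfolding complex_hilbert_def by (rule conjunct2)
  ultimately show ?thesis
    by simp
qed

lemma complex_structure_J: "complex_structure J"
  using complex_inner_product unfolding complex_inner_product_def by (rule conjunct1)

lemma linear_J: "linear J"
  using complex_structure_J unfolding complex_structure_def by (rule conjunct1)

lemma J_J [simp]: "J (J x) = - x"
  using complex_structure_J unfolding complex_structure_def by simp

lemma scC_imaginary_unit: "scC J \<i> x = J x"
  by (simp add: scC_def)

lemma ip_diff_left: "ip (x - y) z = ip x z - ip y z"
  using ip_add_left[of "x - y" y z] by simp

lemma ip_scC_right: "ip x (scC J c y) = cnj c * ip x y"
  by (subst (1 2) ip_commute) (simp add: ip_scC_left)

lemma ip_diff_right: "ip z (x - y) = ip z x - ip z y"
  by (subst (1 2 3) ip_commute) (simp add: ip_diff_left)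

lemma ip_scC_adjoint: "ip (scC J c x) y = ip x (scC J (cnj c) y)"
  by (simp add: ip_scC_left ip_scC_right)

definition rinner :: "'a \<Rightarrow> 'a \<Rightarrow> real" where
  "rinner x y = Re (ip x y)"

lemma rinner_commute: "rinner y x = rinner x y"
  unfolding rinner_def by (subst ip_commute) simp

lemma rinner_add_left: "rinner (x + y) z = rinner x z + rinner y z"
  by (simp add: rinner_def ip_add_left)

lemma rinner_diff_left: "rinner (x - y) z = rinner x z - rinner y z"
  by (simp add: rinner_def ip_diff_left)

lemma rinner_scaleR_left: "rinner (a *\<^sub>R x) y = a * rinner x y"
  using ip_scC_left[of "complex_of_real a" x y] by (simp add: rinner_def scC_def)

lemma rinner_self: "rinner x x = (norm x)\<^sup>2"
  by (simp add: rinner_def Re_ip_self)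

lemma rinner_Cauchy_Schwarz: "\<bar>rinner x y\<bar> \<le> norm x * norm y"
proof (cases "y = 0")
  case True
  then show ?thesis
    using rinner_scaleR_left[of 0 y x] rinner_commute[of x y] by simp
next
  case False
  then have "(norm y)\<^sup>2 > 0"
    by simp
  define t where "t = rinner x y / (norm y)\<^sup>2"
  have t: "t * (norm y)\<^sup>2 = rinner x y"
    using \<open>(norm y)\<^sup>2 > 0\<close> by (simp add: t_def)
  have left: "rinner (x - t *\<^sub>R y) w = rinner x w - t * rinner y w" for w
    by (simp add: rinner_diff_left rinner_scaleR_left)
  then have right: "rinner w (x - t *\<^sub>R y) = rinner w x - t * rinner w y" for w
    using left[of w] rinner_commute[of w "x - t *\<^sub>R y"] rinner_commute[of w x]
      rinner_commute[of w y] by simp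
  have "0 \<le> rinner (x - t *\<^sub>R y) (x - t *\<^sub>R y)"
    by (simp add: rinner_self)
  also have "\<dots> = (norm x)\<^sup>2 - t * rinner x y - t * (rinner x y - t * (norm y)\<^sup>2)"
    unfolding left right by (simp add: rinner_self rinner_commute[of x y])
  also have "\<dots> = (norm x)\<^sup>2 - t * rinner x y"
    by (simp add: t)
  finally have "t * rinner x y * (norm y)\<^sup>2 \<le> (norm x)\<^sup>2 * (norm y)\<^sup>2"
    by (intro mult_right_mono) simp_all
  moreover have "t * rinner x y * (norm y)\<^sup>2 = (rinner x y)\<^sup>2"
    using t by (simp add: power2_eq_square ac_simps)
  ultimately have "(rinner x y)\<^sup>2 \<le> (norm x * norm y)\<^sup>2"
    by (simp add: power_mult_distrib)
  then show ?thesis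
    by (simp add: abs_le_square_iff[symmetric])
qed

sublocale rinner: bounded_bilinear rinner
proof
  show "rinner (x + y) z = rinner x z + rinner y z" for x y z
    by (rule rinner_add_left)
  show "rinner x (y + z) = rinner x y + rinner x z" for x y z
    using rinner_commute[of x "y + z"] rinner_commute[of x y] rinner_commute[of x z]
      rinner_add_left[of y z x] by simp
  show "rinner (a *\<^sub>R x) y = a *\<^sub>R rinner x y" for a x y
    by (simp add: rinner_scaleR_left)
  show "rinner x (a *\<^sub>R y) = a *\<^sub>R rinner x y" for a x y
    using rinner_commute[of x "a *\<^sub>R y"] rinner_commute[of x y] rinner_scaleR_left[of a y x]
    by simp
  show "\<exists>K. \<forall>x y. norm (rinner x y) \<le> norm x * norm y * K"
    using rinner_Cauchy_Schwarz by (intro exI[of _ 1]) simp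
qed

lemma ip_J_left: "ip (J x) y = \<i> * ip x y"
  using ip_scC_left[of \<i> x y] by (simp add: scC_imaginary_unit)

lemma ip_J_right: "ip x (J y) = - \<i> * ip x y"
  using ip_scC_right[of x \<i> y] by (simp add: scC_imaginary_unit)

lemma ip_eq_Complex: "ip x y = Complex (rinner x y) (rinner x (J y))"
  by (simp add: rinner_def ip_J_right complex_eq_iff)

lemma rinner_J_left: "rinner (J x) y = - rinner x (J y)"
  by (simp add: rinner_def ip_J_left ip_J_right)

lemma norm_J: "norm (J x) = norm x"
proof -
  have "(norm (J x))\<^sup>2 = (norm x)\<^sup>2"
    using rinner_J_left[of x "J x"] by (simp add: rinner_self rinner.minus_right)
  then show ?thesis
    by simp
qed

lemma bounded_linear_J: "bounded_linear J"
  by (rule bounded_linear_intro[of _ 1])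
    (simp_all add: linear_add[OF linear_J] linear_scale[OF linear_J] norm_J)

lemma eq_if_rinner_eq:
  assumes "\<And>x. rinner x a = rinner x b"
  shows "a = b"
proof -
  have "rinner (a - b) (a - b) = 0"
    using assms[of "a - b"] by (simp add: rinner.diff_right)
  then show ?thesis
    by (simp add: rinner_self)
qed

lemma norm_add_power2: "(norm (x + y))\<^sup>2 = (norm x)\<^sup>2 + 2 * rinner x y + (norm y)\<^sup>2"
  by (simp add: rinner_self[symmetric] rinner.add_left rinner.add_right rinner_commute[of x y])

lemma parallelogram_law:
  fixes x y :: 'a
  shows "(norm (x + y))\<^sup>2 + (norm (x - y))\<^sup>2 = 2 * (norm x)\<^sup>2 + 2 * (norm y)\<^sup>2"
  using norm_add_power2[of x y] norm_add_power2[of x "- y"] by (simp add: rinner.minus_right)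

lemma rinner_eq_0_if_norm_minimal:
  assumes "\<And>t. norm p \<le> norm (p + t *\<^sub>R v)"
  shows "rinner p v = 0"
proof (rule eq_0_if_quadratic_nonneg)
  fix t :: real
  have "(norm p)\<^sup>2 \<le> (norm (p + t *\<^sub>R v))\<^sup>2"
    using assms[of t] by (simp add: power_mono)
  also have "\<dots> = (norm p)\<^sup>2 + 2 * t * rinner p v + t\<^sup>2 * (norm v)\<^sup>2"
    by (simp add: norm_add_power2 rinner.scaleR_right power_mult_distrib)
  finally show "0 \<le> 2 * t * rinner p v + t\<^sup>2 * (norm v)\<^sup>2"
    by simp
qed

lemma minimising_sequence_Cauchy:
  fixes C :: "'a set"
  assumes midpoint: "\<And>a b. a \<in> C \<Longrightarrow> b \<in> C \<Longrightarrow> (1/2) *\<^sub>R (a + b) \<in> C"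
    and d_le: "\<And>c. c \<in> C \<Longrightarrow> d \<le> (norm c)\<^sup>2"
    and x: "\<And>k. x k \<in> C" and x_small: "\<And>k. (norm (x k))\<^sup>2 < d + 1 / real (Suc k)"
  shows "Cauchy x"
proof (rule metric_CauchyI)
  have dist_bound: "(norm (a - b))\<^sup>2 \<le> 2 * (norm a)\<^sup>2 + 2 * (norm b)\<^sup>2 - 4 * d"
    if "a \<in> C" "b \<in> C" for a b
  proof -
    have "d \<le> (norm ((1/2) *\<^sub>R (a + b)))\<^sup>2"
      using d_le midpoint that by blast
    then have "4 * d \<le> (norm (a + b))\<^sup>2"
      by (simp add: power_mult_distrib power_divide)
    then show ?thesis
      using parallelogram_law[of a b] by linarith
  qed
  fix e :: real assume "0 < e"
  obtain N :: nat where "4 / e\<^sup>2 < real N"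
    using reals_Archimedean2 by blast
  then have "4 < real N * e\<^sup>2"
    using \<open>0 < e\<close> by (simp add: field_simps)
  also have "\<dots> \<le> real (Suc N) * e\<^sup>2"
    by (intro mult_right_mono) simp_all
  finally have N: "4 / real (Suc N) < e\<^sup>2"
    by (simp add: field_simps)
  show "\<exists>M. \<forall>m\<ge>M. \<forall>n\<ge>M. dist (x m) (x n) < e"
  proof (intro exI allI impI)
    fix m n assume "m \<ge> N" "n \<ge> N"
    then have "1 / real (Suc m) \<le> 1 / real (Suc N)" "1 / real (Suc n) \<le> 1 / real (Suc N)"
      by (simp_all add: frac_le)
    then have "(norm (x m - x n))\<^sup>2 < e\<^sup>2"
      using dist_bound[OF x x, of m n] x_small[of m] x_small[of n] N by linarith
    then show "dist (x m) (x n) < e"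
      using \<open>0 < e\<close> by (simp add: dist_norm power_less_imp_less_base[of _ 2])
  qed
qed

lemma exists_min_norm:
  fixes C :: "'a set"
  assumes "closed C" and "C \<noteq> {}"
    and midpoint: "\<And>a b. a \<in> C \<Longrightarrow> b \<in> C \<Longrightarrow> (1/2) *\<^sub>R (a + b) \<in> C"
  shows "\<exists>p\<in>C. \<forall>c\<in>C. norm p \<le> norm c"
proof -
  define d where "d = Inf ((\<lambda>x. (norm x)\<^sup>2) ` C)"
  have bdd: "bdd_below ((\<lambda>x. (norm x)\<^sup>2) ` C)"
    by (rule bdd_belowI2[of _ 0]) simp
  have d_le: "d \<le> (norm c)\<^sup>2" if "c \<in> C" for c
    unfolding d_def using bdd that by (simp add: cInf_lower)
  have "\<exists>x\<in>C. (norm x)\<^sup>2 < d + 1 / real (Suc k)" for k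
    using cInf_less_iff[OF _ bdd, of "d + 1 / real (Suc k)"] \<open>C \<noteq> {}\<close> by (simp add: d_def)
  then obtain x where x: "\<And>k. x k \<in> C" and x_small: "\<And>k. (norm (x k))\<^sup>2 < d + 1 / real (Suc k)"
    by metis
  then have "Cauchy x"
    using midpoint d_le by (intro minimising_sequence_Cauchy)
  then obtain p where "x \<longlonglongrightarrow> p"
    using Cauchy_convergent_iff convergent_def by blast
  have "p \<in> C"
    using closed_sequentially[OF \<open>closed C\<close> x \<open>x \<longlonglongrightarrow> p\<close>] .
  have "(\<lambda>k. (norm (x k))\<^sup>2) \<longlonglongrightarrow> (norm p)\<^sup>2"
    using \<open>x \<longlonglongrightarrow> p\<close> by (intro tendsto_intros)
  moreover have "(\<lambda>k. d + 1 / real (Suc k)) \<longlonglongrightarrow> d + 0"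
    by (intro tendsto_intros LIMSEQ_Suc[OF lim_1_over_n])
  ultimately have "(norm p)\<^sup>2 \<le> d + 0"
    by (rule LIMSEQ_le) (use x_small in \<open>auto intro: less_imp_le\<close>)
  then have "norm p \<le> norm c" if "c \<in> C" for c
    using d_le[OF that] by (simp add: power2_le_imp_le)
  with \<open>p \<in> C\<close> show ?thesis
    by blast
qed

lemma riesz_representation:
  assumes "bounded_linear \<phi>"
  shows "\<exists>z. \<forall>x. \<phi> x = rinner x z"
proof (cases "\<forall>x. \<phi> x = 0")
  case True
  then show ?thesis
    by (intro exI[of _ 0]) (simp add: rinner.zero_right)
next
  case False
  then obtain x0 where "\<phi> x0 \<noteq> 0"
    by blast
  interpret \<phi>: bounded_linear \<phi>
    by (rule assms)
  define C where "C = {x. \<phi> x = 1}"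
  have "closed C"
    unfolding C_def by (rule closed_Collect_eq[OF linear_continuous_on[OF assms] continuous_on_const])
  have "(1 / \<phi> x0) *\<^sub>R x0 \<in> C"
    using \<open>\<phi> x0 \<noteq> 0\<close> by (simp add: C_def \<phi>.scaleR)
  then have "C \<noteq> {}"
    by blast
  have "(1/2) *\<^sub>R (a + b) \<in> C" if "a \<in> C" "b \<in> C" for a b
    using that by (simp add: C_def \<phi>.scaleR \<phi>.add)
  then obtain w where "w \<in> C" and w_min: "\<And>c. c \<in> C \<Longrightarrow> norm w \<le> norm c"
    using exists_min_norm[OF \<open>closed C\<close> \<open>C \<noteq> {}\<close>] by blast
  have w_perp: "rinner w v = 0" if "\<phi> v = 0" for v
  proof (rule rinner_eq_0_if_norm_minimal)
    fix t :: real
    show "norm w \<le> norm (w + t *\<^sub>R v)"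
      using \<open>w \<in> C\<close> that by (intro w_min) (simp add: C_def \<phi>.add \<phi>.scaleR)
  qed
  have "w \<noteq> 0"
    using \<open>w \<in> C\<close> by (auto simp: C_def \<phi>.zero)
  show ?thesis
  proof (intro exI allI)
    fix x
    have "rinner w (x - \<phi> x *\<^sub>R w) = 0"
      using \<open>w \<in> C\<close> by (intro w_perp) (simp add: C_def \<phi>.diff \<phi>.scaleR)
    then have "rinner x w = \<phi> x * (norm w)\<^sup>2"
      by (simp add: rinner.diff_right rinner.scaleR_right rinner_self rinner_commute[of w x])
    then show "\<phi> x = rinner x ((1 / (norm w)\<^sup>2) *\<^sub>R w)"
      using \<open>w \<noteq> 0\<close> by (simp add: rinner.scaleR_right)
  qed
qed

lemma exists_adjoint:
  assumes "bounded_linear T"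
  shows "\<exists>S. bounded_linear S \<and> (\<forall>x y. rinner (T x) y = rinner x (S y))"
proof -
  have "\<exists>z. \<forall>x. rinner (T x) y = rinner x z" for y
    by (rule riesz_representation) (rule bounded_linear_compose[OF rinner.bounded_linear_left assms])
  then obtain S where S: "\<And>x y. rinner (T x) y = rinner x (S y)"
    by metis
  obtain K where K: "\<And>x. norm (T x) \<le> norm x * K" and "K > 0"
    using bounded_linear.pos_bounded[OF assms] by blast
  have "bounded_linear S"
  proof (rule bounded_linear_intro[of _ K])
    show "S (a + b) = S a + S b" for a b
      by (rule eq_if_rinner_eq) (simp add: S[symmetric] rinner.add_right)
    show "S (r *\<^sub>R a) = r *\<^sub>R S a" for r a
      by (rule eq_if_rinner_eq) (simp add: S[symmetric] rinner.scaleR_right)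
    show "norm (S y) \<le> norm y * K" for y
    proof -
      have "(norm (S y))\<^sup>2 = rinner (T (S y)) y"
        by (simp add: S rinner_self)
      also have "\<dots> \<le> norm (T (S y)) * norm y"
        using rinner_Cauchy_Schwarz by (rule abs_le_D1)
      also have "\<dots> \<le> norm (S y) * K * norm y"
        using K by (rule mult_right_mono) simp
      finally have "norm (S y) * norm (S y) \<le> norm (S y) * (norm y * K)"
        by (simp add: power2_eq_square ac_simps)
      then show ?thesis
        using \<open>K > 0\<close> by (cases "S y = 0") (simp_all add: mult_le_cancel_left_pos)
    qed
  qed
  with S show ?thesis
    by blast
qed

lemma norm_le_if_coercive:
  assumes "c * (norm x)\<^sup>2 \<le> rinner (P x) x"
  shows "c * norm x \<le> norm (P x)"
proof (cases "x = 0")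
  case True
  then show ?thesis
    using assms by (simp add: rinner.zero_right)
next
  case False
  have "c * norm x * norm x \<le> norm (P x) * norm x"
    using assms rinner_Cauchy_Schwarz[of "P x" x] by (simp add: power2_eq_square ac_simps)
  then show ?thesis
    using False by simp
qed

lemma surj_if_closed_range:
  assumes P: "bounded_linear P" and "closed (range P)"
    and orthogonal: "\<And>w. (\<And>v. rinner w (P v) = 0) \<Longrightarrow> w = 0"
  shows "surj P"
proof -
  interpret P: bounded_linear P
    by (rule P)
  have "f \<in> range P" for f
  proof -
    define C where "C = (\<lambda>w. f - w) -` range P"
    have "closed C"
      unfolding C_def using \<open>closed (range P)\<close>
      by (intro continuous_closed_vimage) (auto intro: continuous_intros)
    have "f \<in> C"
      using rangeI[of P 0] by (simp add: C_def P.zero)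
    then have "C \<noteq> {}"
      by blast
    have "(1/2) *\<^sub>R (a + b) \<in> C" if "a \<in> C" "b \<in> C" for a b
    proof -
      have "f - a \<in> range P" "f - b \<in> range P"
        using that by (simp_all add: C_def)
      then obtain u v where u: "f - a = P u" and v: "f - b = P v"
        by blast
      have "f - (1/2) *\<^sub>R (a + b) = (1/2) *\<^sub>R (f - a) + (1/2) *\<^sub>R (f - b)"
        by (simp add: algebra_simps flip: scaleR_add_left)
      also have "\<dots> = P ((1/2) *\<^sub>R (u + v))"
        by (simp add: u v P.add P.scaleR scaleR_add_right)
      finally show ?thesis
        by (simp add: C_def)
    qed
    then obtain w where "w \<in> C" and w_min: "\<And>c. c \<in> C \<Longrightarrow> norm w \<le> norm c"
      using exists_min_norm[OF \<open>closed C\<close> \<open>C \<noteq> {}\<close>] by blast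
    then have "f - w \<in> range P"
      by (simp add: C_def)
    then obtain u where u: "f - w = P u"
      by blast
    have "rinner w (P v) = 0" for v
    proof (rule rinner_eq_0_if_norm_minimal)
      fix t :: real
      have "f - (w + t *\<^sub>R P v) = P (u - t *\<^sub>R v)"
        by (simp add: P.diff P.scaleR flip: u)
      then show "norm w \<le> norm (w + t *\<^sub>R P v)"
        by (intro w_min) (simp add: C_def)
    qed
    then have "w = 0"
      by (rule orthogonal)
    with u show ?thesis
      by (metis rangeI diff_zero)
  qed
  then show ?thesis
    by blast
qed

text \<open>Lax--Milgram: the range is closed because P is bounded below, and a vector orthogonal
  to it is orthogonal to itself by coercivity.\<close>
lemma surj_if_coercive:
  assumes P: "bounded_linear P" and "c > 0" and coercive: "\<And>x. c * (norm x)\<^sup>2 \<le> rinner (P x) x"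
  shows "surj P"
proof (rule surj_if_closed_range[OF P])
  have "c * norm x \<le> norm (P x)" for x
    by (rule norm_le_if_coercive[where P = P, OF coercive])
  then show "closed (range P)"
    using complete_isometric_image[OF \<open>c > 0\<close> subspace_UNIV P _ complete_UNIV]
    by (simp add: complete_imp_closed)
  show "w = 0" if "\<And>v. rinner w (P v) = 0" for w
  proof -
    have "c * (norm w)\<^sup>2 \<le> 0"
      using coercive[of w] that[of w] by (simp add: rinner_commute[of "P w" w])
    then show ?thesis
      using \<open>c > 0\<close> by (simp add: mult_le_0_iff)
  qed
qed

lemma bij_if_coercive:
  assumes P: "bounded_linear P" and "c > 0" and coercive: "\<And>x. c * (norm x)\<^sup>2 \<le> rinner (P x) x"
  shows "bij P"
proof (rule bijI)
  interpret P: bounded_linear P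
    by (rule P)
  show "inj P"
  proof (rule injI)
    fix x y assume "P x = P y"
    then have "c * norm (x - y) \<le> 0"
      using norm_le_if_coercive[where P = P, OF coercive, of "x - y"] by (simp add: P.diff)
    then show "x = y"
      using \<open>c > 0\<close> by (simp add: mult_le_0_iff)
  qed
  show "surj P"
    using assms by (rule surj_if_coercive)
qed


section \<open>Adjoints of complex-linear operators\<close>

lemma bounded_clinear_op_iff:
  "bounded_clinear_op J T \<longleftrightarrow> bounded_linear T \<and> (\<forall>x. T (J x) = J (T x))"
proof
  assume "bounded_clinear_op J T"
  then show "bounded_linear T \<and> (\<forall>x. T (J x) = J (T x))"
    unfolding bounded_clinear_op_def by (metis scC_imaginary_unit)
next
  assume T: "bounded_linear T \<and> (\<forall>x. T (J x) = J (T x))"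
  then have "linear T"
    by (simp add: bounded_linear.linear)
  with T show "bounded_clinear_op J T"
    by (simp add: bounded_clinear_op_def scC_def linear_add linear_scale)
qed

lemma bounded_clinear_op_scC: "bounded_clinear_op J (scC J c)"
  unfolding bounded_clinear_op_iff
proof
  show "bounded_linear (scC J c)"
    unfolding scC_def[abs_def]
    by (intro bounded_linear_add bounded_linear_scaleR_right bounded_linear_ident
        bounded_linear_compose[OF bounded_linear_scaleR_right bounded_linear_J])
  show "\<forall>x. scC J c (J x) = J (scC J c x)"
    by (simp add: scC_def linear_add[OF linear_J] linear_scale[OF linear_J])
qed

lemma bounded_clinear_op_shift:
  assumes "bounded_clinear_op J T"
  shows "bounded_clinear_op J (shift J T c)"
  using assms bounded_clinear_op_scC[of c] unfolding bounded_clinear_op_iff shift_def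
  by (simp add: bounded_linear_sub linear_diff[OF linear_J])

lemma adjoint_commute_J:
  assumes "\<And>x. T (J x) = J (T x)" and "\<And>x y. rinner (T x) y = rinner x (S y)"
  shows "S (J y) = J (S y)"
proof (rule eq_if_rinner_eq)
  fix x
  have "rinner x (S (J y)) = rinner (T x) (J y)"
    by (simp add: assms(2))
  also have "\<dots> = - rinner (J (T x)) y"
    by (simp add: rinner_J_left)
  also have "\<dots> = - rinner (J x) (S y)"
    by (simp flip: assms)
  also have "\<dots> = rinner x (J (S y))"
    by (simp add: rinner_J_left)
  finally show "rinner x (S (J y)) = rinner x (J (S y))" .
qed

lemma adj_eqI:
  assumes "\<And>x y. ip (T x) y = ip x (S y)"
  shows "adj ip T = S"
proof
  fix y
  show "adj ip T y = S y"
    unfolding adj_def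
  proof (rule the_equality)
    show "\<forall>x. ip (T x) y = ip x (S y)"
      using assms by blast
    show "z = S y" if "\<forall>x. ip (T x) y = ip x z" for z
      using that assms by (intro eq_if_rinner_eq) (simp add: rinner_def)
  qed
qed

lemma exists_clinear_adjoint:
  assumes "bounded_clinear_op J T"
  shows "\<exists>S. bounded_clinear_op J S \<and> (\<forall>x y. ip (T x) y = ip x (S y))"
proof -
  have T: "bounded_linear T" "\<And>x. T (J x) = J (T x)"
    using assms by (simp_all add: bounded_clinear_op_iff)
  obtain S where S: "bounded_linear S" "\<And>x y. rinner (T x) y = rinner x (S y)"
    using exists_adjoint[OF T(1)] by blast
  have S_J: "S (J y) = J (S y)" for y
    using T(2) S(2) by (rule adjoint_commute_J)
  have "ip (T x) y = ip x (S y)" for x y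
    by (simp add: ip_eq_Complex S(2) S_J)
  with S(1) S_J show ?thesis
    by (auto simp: bounded_clinear_op_iff)
qed

lemma bounded_clinear_op_adj: "bounded_clinear_op J T \<Longrightarrow> bounded_clinear_op J (adj ip T)"
  using exists_clinear_adjoint adj_eqI by metis

lemma ip_adj: "bounded_clinear_op J T \<Longrightarrow> ip (T x) y = ip x (adj ip T y)"
  using exists_clinear_adjoint adj_eqI by metis

lemma adj_shift:
  assumes "bounded_clinear_op J T"
  shows "adj ip (shift J T c) = shift J (adj ip T) (cnj c)"
  by (rule adj_eqI)
    (simp add: shift_def ip_diff_left ip_diff_right ip_scC_adjoint ip_adj[OF assms])

lemma shift_commute:
  assumes P: "bounded_clinear_op J P" and Q: "bounded_clinear_op J Q"
    and PQ: "\<And>x. P (Q x) = Q (P x)"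
  shows "shift J P a (shift J Q b x) = shift J Q b (shift J P a x)"
proof -
  have "linear P" "linear Q" "linear (scC J a)" "linear (scC J b)"
    using P Q bounded_clinear_op_scC[of a] bounded_clinear_op_scC[of b]
    by (simp_all add: bounded_clinear_op_def bounded_linear.linear)
  moreover have "P (scC J b x) = scC J b (P x)" "Q (scC J a x) = scC J a (Q x)"
    "scC J a (scC J b x) = scC J b (scC J a x)"
    using P Q bounded_clinear_op_scC[of a] by (simp_all add: bounded_clinear_op_def)
  ultimately show ?thesis
    by (simp add: shift_def linear_diff PQ algebra_simps)
qed

end

section \<open>Coercivity of the Koszul Laplacians\<close>

lemma sum_norm_power2_bounded_below:
  fixes F :: "'i \<Rightarrow> 'a::real_normed_vector \<Rightarrow> 'b::real_normed_vector"
  assumes "finite K" and linear: "\<And>k. k \<in> K \<Longrightarrow> linear (F k)"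
    and no_approx_zero: "\<nexists>y. (\<forall>m. norm (y m) = 1) \<and> (\<forall>k\<in>K. (\<lambda>m. F k (y m)) \<longlonglongrightarrow> 0)"
  shows "\<exists>c>0. \<forall>x. c * (norm x)\<^sup>2 \<le> (\<Sum>k\<in>K. (norm (F k x))\<^sup>2)"
proof (rule ccontr)
  define Q where "Q x = (\<Sum>k\<in>K. (norm (F k x))\<^sup>2)" for x
  have Q_scaleR: "Q (r *\<^sub>R x) = r\<^sup>2 * Q x" for r x
    unfolding Q_def sum_distrib_left
    by (intro sum.cong refl) (simp add: linear_scale[OF linear] power_mult_distrib)
  assume "\<not> ?thesis"
  then have small: "\<exists>x. Q x < c * (norm x)\<^sup>2" if "c > 0" for c
    using that by (auto simp: Q_def not_le)
  have "\<exists>y. norm y = 1 \<and> Q y < (1 / real (Suc m))\<^sup>2" for m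
  proof -
    obtain x where x: "Q x < (1 / real (Suc m))\<^sup>2 * (norm x)\<^sup>2"
      using small[of "(1 / real (Suc m))\<^sup>2"] by auto
    then have "x \<noteq> 0"
      using Q_scaleR[of 0 x] by auto
    have "Q ((1 / norm x) *\<^sub>R x) = Q x / (norm x)\<^sup>2"
      by (simp add: Q_scaleR power_divide)
    also have "\<dots> < (1 / real (Suc m))\<^sup>2"
      using x \<open>x \<noteq> 0\<close> by (simp add: divide_less_eq)
    finally show ?thesis
      using \<open>x \<noteq> 0\<close> by (intro exI[of _ "(1 / norm x) *\<^sub>R x"]) simp
  qed
  then obtain y where y_unit: "\<And>m. norm (y m) = 1" and y_small: "\<And>m. Q (y m) < (1 / real (Suc m))\<^sup>2"
    by metis
  have "(\<lambda>m. F k (y m)) \<longlonglongrightarrow> 0" if "k \<in> K" for k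
  proof (rule LIMSEQ_norm_0)
    fix m
    have "(norm (F k (y m)))\<^sup>2 \<le> Q (y m)"
      unfolding Q_def using \<open>finite K\<close> that by (intro member_le_sum) auto
    then have "(norm (F k (y m)))\<^sup>2 < (1 / real (Suc m))\<^sup>2"
      using y_small[of m] by linarith
    then show "norm (F k (y m)) < 1 / real (Suc m)"
      by (rule power_less_imp_less_base) simp
  qed
  with y_unit no_approx_zero show False
    by blast
qed

context complex_hilbert_space
begin

lemma koszul_laplacian_bij:
  assumes "S \<subseteq> {..<n}"
    and A: "\<And>i. i < n \<Longrightarrow> bounded_linear (A i)" and B: "\<And>i. i < n \<Longrightarrow> bounded_linear (B i)"
    and adjoint: "\<And>i x y. i < n \<Longrightarrow> rinner (A i x) y = rinner x (B i y)"
    and no_approx_zero: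
      "\<nexists>y. (\<forall>m. norm (y m) = 1) \<and> (\<forall>i<n. (\<lambda>m. (if i \<in> S then A i else B i) (y m)) \<longlonglongrightarrow> 0)"
  shows "bij (koszul_laplacian n A B S)"
proof -
  define F where "F i = (if i \<in> S then A i else B i)" for i
  have "linear (F i)" if "i \<in> {..<n}" for i
    using A B that by (simp add: F_def bounded_linear.linear)
  moreover have "\<nexists>y. (\<forall>m. norm (y m) = 1) \<and> (\<forall>i\<in>{..<n}. (\<lambda>m. F i (y m)) \<longlonglongrightarrow> 0)"
    using no_approx_zero unfolding F_def lessThan_iff by blast
  ultimately have "\<exists>c>0. \<forall>x. c * (norm x)\<^sup>2 \<le> (\<Sum>i<n. (norm (F i x))\<^sup>2)"
    by (intro sum_norm_power2_bounded_below) auto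
  then obtain c where "c > 0" and c: "\<And>x. c * (norm x)\<^sup>2 \<le> (\<Sum>i<n. (norm (F i x))\<^sup>2)"
    by blast
  have "rinner (koszul_laplacian n A B S x) x = (\<Sum>i<n. (norm (F i x))\<^sup>2)" for x
  proof -
    have AB: "rinner (A i (B i x)) x = (norm (B i x))\<^sup>2" if "i < n" for i
      using adjoint[OF that] by (simp add: rinner_self)
    have BA: "rinner (B i (A i x)) x = (norm (A i x))\<^sup>2" if "i < n" for i
      using adjoint[OF that, of x "A i x"] rinner_commute[of x "B i (A i x)"] by (simp add: rinner_self)
    have "rinner (koszul_laplacian n A B S x) x
        = (\<Sum>i\<in>{..<n} - S. rinner (A i (B i x)) x) + (\<Sum>i\<in>S. rinner (B i (A i x)) x)"
      by (simp add: koszul_laplacian_def rinner.add_left rinner.sum_left)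
    also have "\<dots> = (\<Sum>i\<in>{..<n} - S. (norm (F i x))\<^sup>2) + (\<Sum>i\<in>S. (norm (F i x))\<^sup>2)"
      using \<open>S \<subseteq> {..<n}\<close>
      by (intro arg_cong2[where f = "(+)"] sum.cong refl)
        (auto simp: F_def AB BA)
    also have "\<dots> = (\<Sum>i<n. (norm (F i x))\<^sup>2)"
      using \<open>S \<subseteq> {..<n}\<close> by (simp add: sum.subset_diff[of S "{..<n}"])
    finally show ?thesis .
  qed
  moreover have "bounded_linear (koszul_laplacian n A B S)"
    unfolding koszul_laplacian_def[abs_def] using \<open>S \<subseteq> {..<n}\<close> A B
    by (intro bounded_linear_add bounded_linear_sum bounded_linear_compose[of "A _" "B _"]
        bounded_linear_compose[of "B _" "A _"]) auto
  ultimately show ?thesis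
    using c \<open>c > 0\<close> by (intro bij_if_coercive) auto
qed

lemma koszul_pair_shift:
  assumes T: "\<forall>j<n. bounded_clinear_op J (T j)" and "doubly_commuting ip n T"
  shows "koszul_pair n (\<lambda>j. shift J (T j) (z j)) (\<lambda>j. adj ip (shift J (T j) (z j)))"
proof (intro koszul_pair.intro commuting_linear_tuple.intro koszul_pair_axioms.intro)
  have commute: "T i (T l x) = T l (T i x)" "adj ip (T l) (T i x) = T i (adj ip (T l) x)"
    if "i < n" "l < n" "i \<noteq> l" for i l x
    using assms(2) that unfolding doubly_commuting_def by (metis comp_apply)+
  show "linear (shift J (T i) (z i))" if "i < n" for i
    using T that bounded_clinear_op_shift
    by (simp add: bounded_clinear_op_def bounded_linear.linear)
  show "linear (adj ip (shift J (T i) (z i)))" if "i < n" for i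
    using T that bounded_clinear_op_shift bounded_clinear_op_adj
    by (simp add: bounded_clinear_op_def bounded_linear.linear)
  show "shift J (T i) (z i) (shift J (T l) (z l) x) = shift J (T l) (z l) (shift J (T i) (z i) x)"
    if "i < n" "l < n" for i l x
    using T that commute(1) by (cases "i = l") (simp_all add: shift_commute)
  show "adj ip (shift J (T l) (z l)) (shift J (T i) (z i) x)
      = shift J (T i) (z i) (adj ip (shift J (T l) (z l)) x)"
    if "i < n" "l < n" "i \<noteq> l" for i l x
    using T that commute(2) by (simp add: adj_shift shift_commute bounded_clinear_op_adj)
qed

text \<open>For j in S the Laplacian only controls A_j; Property (1) upgrades A_j y_m \<longlonglongrightarrow> 0
  to A_j* y_m \<longlonglongrightarrow> 0.\<close>
lemma koszul_exact_if_no_joint_approx_adjoint: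
  assumes T: "\<forall>j<n. bounded_clinear_op J (T j)" and "doubly_commuting ip n T"
    and property1: "\<forall>j<n. property1 J ip (T j)"
    and no_approx: "\<nexists>y. (\<forall>m. norm (y m) = 1) \<and>
      (\<forall>j<n. (\<lambda>m. adj ip (shift J (T j) (z j)) (y m)) \<longlonglongrightarrow> 0)"
  shows "koszul_exact n (\<lambda>j. shift J (T j) (z j))"
proof -
  define A where "A j = shift J (T j) (z j)" for j
  define B where "B j = adj ip (A j)" for j
  interpret koszul_pair n A B
    unfolding A_def B_def using T assms(2) by (rule koszul_pair_shift)
  have A: "bounded_clinear_op J (A j)" and B: "bounded_clinear_op J (B j)" if "j < n" for j
    using T that by (simp_all add: A_def B_def bounded_clinear_op_shift bounded_clinear_op_adj)
  have "bij (koszul_laplacian n A B S)" if "S \<subseteq> {..<n}" for S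
  proof (rule koszul_laplacian_bij[OF that])
    show "bounded_linear (A i)" "bounded_linear (B i)" if "i < n" for i
      using A[OF that] B[OF that] by (simp_all add: bounded_clinear_op_def)
    show "rinner (A i x) y = rinner x (B i y)" if "i < n" for i x y
      using A[OF that] by (simp add: B_def rinner_def ip_adj)
    show "\<nexists>y. (\<forall>m. norm (y m) = 1) \<and> (\<forall>i<n. (\<lambda>m. (if i \<in> S then A i else B i) (y m)) \<longlonglongrightarrow> 0)"
    proof
      assume "\<exists>y. (\<forall>m. norm (y m) = 1) \<and> (\<forall>i<n. (\<lambda>m. (if i \<in> S then A i else B i) (y m)) \<longlonglongrightarrow> 0)"
      then obtain y where unit: "\<forall>m. norm (y m) = 1"
        and y: "\<And>i. i < n \<Longrightarrow> (\<lambda>m. (if i \<in> S then A i else B i) (y m)) \<longlonglongrightarrow> 0"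
        by blast
      have "(\<lambda>m. B i (y m)) \<longlonglongrightarrow> 0" if "i < n" for i
        using y[OF that] unit property1 that
        by (cases "i \<in> S") (auto simp: A_def B_def property1_def)
      with unit no_approx show False
        by (auto simp: A_def B_def)
    qed
  qed
  then show ?thesis
    unfolding A_def[symmetric] by (rule koszul_exact_if_laplacian_bij)
qed

end

theorem theorem2p2:
  fixes J :: "'a::banach \<Rightarrow> 'a" and ip :: "'a \<Rightarrow> 'a \<Rightarrow> complex"
    and n :: nat and T :: "nat \<Rightarrow> 'a \<Rightarrow> 'a" and z :: "nat \<Rightarrow> complex"
  assumes "complex_hilbert J ip"
    and "\<forall>j<n. bounded_clinear_op J (T j)"
    and "doubly_commuting ip n T"
    and "\<forall>j<n. property1 J ip (T j)"
    and "z \<in> taylor_spectrum J n T"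
  shows "(\<exists>y::nat \<Rightarrow> 'a. (\<forall>m. norm (y m) = 1) \<and>
            (\<forall>j<n. (\<lambda>m. adj ip (shift J (T j) (z j)) (y m)) \<longlonglongrightarrow> 0))
         \<and> (\<lambda>j. cnj (z j)) \<in> joint_approx_point_spectrum J n (\<lambda>j. adj ip (T j))"
proof -
  interpret complex_hilbert_space J ip
    by (rule complex_hilbert_space.intro) (rule assms(1))
  have "\<not> koszul_exact n (\<lambda>j. shift J (T j) (z j))"
    using assms(5) by (simp add: taylor_spectrum_def)
  then obtain y where unit: "\<forall>m. norm (y m) = 1"
    and y: "\<forall>j<n. (\<lambda>m. adj ip (shift J (T j) (z j)) (y m)) \<longlonglongrightarrow> 0"
    using koszul_exact_if_no_joint_approx_adjoint[OF assms(2-4)] by blast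
  moreover have "adj ip (shift J (T j) (z j)) = shift J (adj ip (T j)) (cnj (z j))" if "j < n" for j
    using assms(2) that by (simp add: adj_shift)
  ultimately show ?thesis
    unfolding joint_approx_point_spectrum_def by auto
qed

end
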